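(* Let $0<b<c$ and let $(x_1,y_1),\ldots,(x_T,y_T)\in\mathbb{R}^d\times\{-1,+1\}$ be an arbitrary finite sequence of examples. Run the LASEC algorithm (described in the context) on this sequence, and let $t_1<t_2<\cdots<t_m$ be the rounds on which it makes a mistake, so that $m$ is its total number of mistakes. For $k=1,\ldots,m$ let $D_k$ be the matrix stored after the $k$-th update. Then for every sequence of vectors $u_1,\ldots,u_T\in\mathbb{R}^d$ and every $\gamma>0$, $$m\le \frac{1}{\gamma}L_{\gamma,T}(\{u_t\})+\frac{1}{\gamma}\sqrt{\Big(b\|u_{t_1}\|^2+cV_m+\sum_{k=1}^{m}(u_{t_k}^\top x_{t_k})^2\Big)\sum_{k=1}^{m}x_{t_k}^\top D_k^{-1}x_{t_k}},$$ where $V_m=\sum_{k=2}^{m}\|u_{t_k}-u_{t_{k-1}}\|^2$.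
   Context: LASEC algorithm with parameters $0<b<c$. Initialize $D_0=\frac{bc}{c-b}I\in\mathbb{R}^{d\times d}$, $e_0=0\in\mathbb{R}^d$, $k=1$. For $t=1,\ldots,T$: receive $x_t$; set $S_t=(D_{k-1}^{-1}+c^{-1}I)^{-1}+x_tx_t^\top$ and $\hat p_t=x_t^\top S_t^{-1}(I+c^{-1}D_{k-1})^{-1}e_{k-1}$; predict $\hat y_t=\mathrm{sign}(\hat p_t)$; receive $y_t$; if $\hat y_t\ne y_t$ (a mistake), set $e_k=(I+c^{-1}D_{k-1})^{-1}e_{k-1}+y_tx_t$, $D_k=S_t$, and $k\leftarrow k+1$. Hinge loss: $\ell_{\gamma,t}(u)=\max\{0,\gamma-y_tu^\top x_t\}$, and $L_{\gamma,T}(\{u_t\})=\sum_{t=1}^T\ell_{\gamma,t}(u_t)$. *)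

theory Defs
  imports "HOL-Analysis.Analysis"
begin

type_synonym 'd mat = "real ^ 'd ^ 'd"
type_synonym 'd vec = "real ^ 'd"

definition outer :: "'d::finite vec \<Rightarrow> 'd mat" where
  "outer x = (\<chi> i j. x $ i * x $ j)"

definition lasec_D0 :: "real \<Rightarrow> real \<Rightarrow> 'd::finite mat" where
  "lasec_D0 b c = mat (b * c / (c - b))"

definition lasec_S :: "real \<Rightarrow> 'd::finite mat \<Rightarrow> 'd vec \<Rightarrow> 'd mat" where
  "lasec_S c D x = matrix_inv (matrix_inv D + mat (1 / c)) + outer x"

definition lasec_p :: "real \<Rightarrow> 'd::finite mat \<Rightarrow> 'd vec \<Rightarrow> 'd vec \<Rightarrow> real" where
  "lasec_p c D e x =
     x \<bullet> (matrix_inv (lasec_S c D x) *v (matrix_inv (mat 1 + (1 / c) *\<^sub>R D) *v e))"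

text \<open>State (D, e) of LASEC after rounds 1..t (rounds are indexed from 1).\<close>
fun lasec_state :: "real \<Rightarrow> real \<Rightarrow> (nat \<Rightarrow> 'd::finite vec) \<Rightarrow> (nat \<Rightarrow> real) \<Rightarrow> nat
      \<Rightarrow> 'd mat \<times> 'd vec" where
  "lasec_state b c x y 0 = (lasec_D0 b c, 0)"
| "lasec_state b c x y (Suc t) =
     (let (D, e) = lasec_state b c x y t;
          p = lasec_p c D e (x (Suc t))
      in if sgn p \<noteq> y (Suc t)
         then (lasec_S c D (x (Suc t)),
               matrix_inv (mat 1 + (1 / c) *\<^sub>R D) *v e + y (Suc t) *\<^sub>R x (Suc t))
         else (D, e))"

definition lasec_mistake :: "real \<Rightarrow> real \<Rightarrow> (nat \<Rightarrow> 'd::finite vec) \<Rightarrow> (nat \<Rightarrow> real) \<Rightarrow> nat \<Rightarrow> bool" where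
  "lasec_mistake b c x y t =
     (let (D, e) = lasec_state b c x y (t - 1) in sgn (lasec_p c D e (x t)) \<noteq> y t)"

definition lasec_mistakes :: "real \<Rightarrow> real \<Rightarrow> (nat \<Rightarrow> 'd::finite vec) \<Rightarrow> (nat \<Rightarrow> real) \<Rightarrow> nat \<Rightarrow> nat set" where
  "lasec_mistakes b c x y T = {t \<in> {1..T}. lasec_mistake b c x y t}"

definition hinge_total :: "real \<Rightarrow> (nat \<Rightarrow> 'd::finite vec) \<Rightarrow> (nat \<Rightarrow> real) \<Rightarrow> (nat \<Rightarrow> 'd vec) \<Rightarrow> nat \<Rightarrow> real" where
  "hinge_total \<gamma> x y u T = (\<Sum>t = 1..T. max 0 (\<gamma> - y t * (u t \<bullet> x t)))"

end

theory Submission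
  imports Defs
begin

text \<open>
  Read the state \<open>(D, e)\<close> as the potential \<open>\<Phi>(w) = (w - D\<^sup>-\<^sup>1e)\<^sup>T D (w - D\<^sup>-\<^sup>1e) \<ge> 0\<close>.
  On a mistake with example \<open>(x, y)\<close>, the new state \<open>(D', e')\<close> satisfies, for all \<open>v\<close> and \<open>w\<close>,
  \<open>\<Phi>'(v) - x\<^sup>T D'\<^sup>-\<^sup>1 x \<le> \<Phi>(w) + c \<parallel>v - w\<parallel>\<^sup>2 + (v\<^sup>T x)\<^sup>2 - 2 y v\<^sup>T x\<close>:
  the smoothing \<open>D \<mapsto> (D\<^sup>-\<^sup>1 + I/c)\<^sup>-\<^sup>1\<close> is an infimal convolution with \<open>c \<parallel>\<cdot>\<parallel>\<^sup>2\<close> and costs the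
  drift term, and the rank-one update costs nothing more because the prediction margin had the
  wrong sign. Telescoping along \<open>v\<^sub>k = \<alpha> u(t\<^sub>k)\<close> (with the best \<open>v\<^sub>0\<close>) and \<open>\<Phi> \<ge> 0\<close> give
  \<open>2 \<alpha> S \<le> \<alpha>\<^sup>2 Q + R\<close> for every real \<open>\<alpha>\<close>, where \<open>S = \<Sigma>\<^sub>k y(t\<^sub>k) u(t\<^sub>k)\<^sup>T x(t\<^sub>k)\<close> and \<open>Q\<close>, \<open>R\<close>
  are the two factors under the square root. Hence \<open>S \<le> \<surd>(Q R)\<close>, while the hinge loss is at
  least \<open>m \<gamma> - S\<close>.
\<close>

lemma mat_mult_vector: "mat k *v (v::real^'n::finite) = k *\<^sub>R v"
  by (simp add: vec_eq_iff matrix_vector_mult_def mat_def if_distrib if_distribR sum.delta cong: if_cong)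

lemma quadratic_form_mat: "v \<bullet> (mat k *v v) = k * (norm (v::real^'n::finite))\<^sup>2"
  by (simp add: mat_mult_vector power2_norm_eq_inner)

lemma outer_mult_vector: "outer x *v w = (x \<bullet> w) *\<^sub>R x"
  by (simp add: vec_eq_iff matrix_vector_mult_def outer_def inner_vec_def sum_distrib_left
      sum_distrib_right mult_ac)

lemma matrix_inv_inverse:
  fixes A :: "real^'n::finite^'n"
  assumes "invertible A"
  shows "A ** matrix_inv A = mat 1" "matrix_inv A ** A = mat 1"
  using someI_ex[OF assms[unfolded invertible_def]] unfolding matrix_inv_def by auto

lemma matrix_inv_eq_right_inverse:
  fixes A B :: "real^'n::finite^'n"
  assumes "A ** B = mat 1"
  shows "matrix_inv A = B"
proof -
  have "invertible A" using assms invertible_right_inverse by blast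
  have "matrix_inv A = matrix_inv A ** (A ** B)" by (simp add: assms)
  also have "\<dots> = B" by (simp add: matrix_mul_assoc matrix_inv_inverse(2)[OF \<open>invertible A\<close>])
  finally show ?thesis .
qed

lemma matrix_inv_cancel:
  fixes A :: "real^'n::finite^'n"
  assumes "invertible A"
  shows "A *v (matrix_inv A *v v) = v" "matrix_inv A *v (A *v v) = v"
  by (simp_all add: matrix_vector_mul_assoc matrix_inv_inverse[OF assms])

definition posdef :: "real^'n::finite^'n \<Rightarrow> bool" where
  "posdef M \<longleftrightarrow> (\<forall>v w. v \<bullet> (M *v w) = (M *v v) \<bullet> w) \<and> (\<forall>v. v \<noteq> 0 \<longrightarrow> 0 < v \<bullet> (M *v v))"

lemma posdef_symmetric: "posdef M \<Longrightarrow> v \<bullet> (M *v w) = (M *v v) \<bullet> w"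
  unfolding posdef_def by blast

lemma posdef_pos: "posdef M \<Longrightarrow> v \<noteq> 0 \<Longrightarrow> 0 < v \<bullet> (M *v v)"
  unfolding posdef_def by blast

lemma posdef_nonneg: "posdef M \<Longrightarrow> 0 \<le> v \<bullet> (M *v v)"
  using posdef_pos[of M v] by (cases "v = 0") auto

lemma posdef_quadratic_form_diff:
  assumes "posdef M"
  shows "(v - w) \<bullet> (M *v (v - w)) = v \<bullet> (M *v v) - 2 * (v \<bullet> (M *v w)) + w \<bullet> (M *v w)"
  using posdef_symmetric[OF assms, of w v]
  by (simp add: matrix_vector_mult_diff_distrib inner_diff_left inner_diff_right inner_commute)

lemma posdef_invertible:
  assumes "posdef M" shows "invertible M"
proof -
  have "\<forall>v. M *v v = 0 \<longrightarrow> v = 0"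
    using posdef_pos[OF assms] by (metis inner_zero_right less_irrefl)
  then show ?thesis using matrix_left_invertible_ker invertible_left_inverse by blast
qed

lemma posdef_matrix_inv:
  assumes "posdef M" shows "posdef (matrix_inv M)"
proof -
  have M: "invertible M" using posdef_invertible[OF assms] .
  have "v \<bullet> (matrix_inv M *v w) = (matrix_inv M *v v) \<bullet> w" for v w
    using posdef_symmetric[OF assms, of "matrix_inv M *v v" "matrix_inv M *v w"]
    by (simp add: matrix_inv_cancel[OF M] inner_commute)
  moreover have "0 < v \<bullet> (matrix_inv M *v v)" if "v \<noteq> 0" for v
  proof -
    have "matrix_inv M *v v \<noteq> 0" using that matrix_inv_cancel(1)[OF M, of v] by auto
    then show ?thesis
      using posdef_pos[OF assms] by (metis matrix_inv_cancel(1)[OF M] inner_commute)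
  qed
  ultimately show ?thesis unfolding posdef_def by blast
qed

lemma posdef_mat: "0 < a \<Longrightarrow> posdef (mat a :: real^'n::finite^'n)"
  unfolding posdef_def by (auto simp: mat_mult_vector inner_commute)

lemma posdef_add_mat:
  assumes "posdef A" "0 < a" shows "posdef (A + mat a)"
  using assms unfolding posdef_def
  by (auto simp: mat_mult_vector matrix_vector_mult_add_rdistrib inner_add_left inner_add_right
      inner_commute add_pos_pos)

lemma quadratic_form_add_outer: "v \<bullet> ((A + outer x) *v v) = v \<bullet> (A *v v) + (x \<bullet> v)\<^sup>2"
  by (simp add: matrix_vector_mult_add_rdistrib outer_mult_vector inner_add_right power2_eq_square
      inner_commute)

lemma posdef_add_outer:
  assumes "posdef A" shows "posdef (A + outer x)"
proof -
  have "0 < v \<bullet> ((A + outer x) *v v)" if "v \<noteq> 0" for v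
    using posdef_pos[OF assms that] by (simp add: quadratic_form_add_outer add_pos_nonneg)
  moreover have "v \<bullet> ((A + outer x) *v w) = ((A + outer x) *v v) \<bullet> w" for v w
    using posdef_symmetric[OF assms, of v w]
    by (simp add: matrix_vector_mult_add_rdistrib outer_mult_vector inner_add_right inner_add_left
        inner_commute)
  ultimately show ?thesis unfolding posdef_def by blast
qed

lemma posdef_twice_inner_le:
  assumes "posdef D"
  shows "2 * (z \<bullet> t) \<le> z \<bullet> (D *v z) + t \<bullet> (matrix_inv D *v t)"
proof -
  let ?w = "matrix_inv D *v t"
  have Dw: "D *v ?w = t" using matrix_inv_cancel(1)[OF posdef_invertible[OF assms]] .
  have "0 \<le> (z - ?w) \<bullet> (D *v (z - ?w))" using posdef_nonneg[OF assms] .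
  also have "\<dots> = z \<bullet> (D *v z) - 2 * (z \<bullet> t) + t \<bullet> ?w"
    unfolding posdef_quadratic_form_diff[OF assms] Dw by (simp add: inner_commute)
  finally show ?thesis by simp
qed

lemma twice_inner_le_scaled:
  fixes r t :: "'a::real_inner"
  assumes "0 < c"
  shows "2 * (t \<bullet> r) \<le> c * (r \<bullet> r) + (t \<bullet> t) / c"
proof -
  have "0 \<le> ((c *\<^sub>R r - t) \<bullet> (c *\<^sub>R r - t)) / c" using assms by simp
  also have "\<dots> = c * (r \<bullet> r) - 2 * (t \<bullet> r) + (t \<bullet> t) / c"
    using assms by (simp add: inner_diff_left inner_diff_right inner_commute field_simps)
  finally show ?thesis by simp
qed

lemma quadratic_form_smoothed_le:
  assumes D: "posdef D" and c: "0 < c"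
  shows "s \<bullet> (matrix_inv (matrix_inv D + mat (1 / c)) *v s) \<le> z \<bullet> (D *v z) + c * (norm (s - z))\<^sup>2"
proof -
  let ?Q = "matrix_inv D + mat (1 / c)"
  define t where "t = matrix_inv ?Q *v s"
  have "invertible ?Q"
    using posdef_invertible[OF posdef_add_mat[OF posdef_matrix_inv[OF D]]] c by simp
  then have "s = matrix_inv D *v t + (1 / c) *\<^sub>R t"
    using matrix_inv_cancel(1)[of ?Q s] unfolding t_def
    by (simp add: matrix_vector_mult_add_rdistrib mat_mult_vector)
  then have st: "s \<bullet> t = t \<bullet> (matrix_inv D *v t) + (t \<bullet> t) / c"
    by (simp add: inner_add_right inner_commute)
  have "2 * (s \<bullet> t) = 2 * (z \<bullet> t) + 2 * (t \<bullet> (s - z))"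
    by (simp add: inner_diff_right inner_commute algebra_simps)
  also have "\<dots> \<le> z \<bullet> (D *v z) + c * (norm (s - z))\<^sup>2 + s \<bullet> t"
    using posdef_twice_inner_le[OF D, of z t] twice_inner_le_scaled[OF c, of t "s - z"] st
    by (simp add: power2_norm_eq_inner)
  finally show ?thesis unfolding t_def by simp
qed

lemma matrix_inv_id_plus_scaled:
  fixes D :: "real^'n::finite^'n"
  assumes D: "posdef D" and c: "0 < c"
  shows "matrix_inv (mat 1 + (1 / c) *\<^sub>R D) = matrix_inv (matrix_inv D + mat (1 / c)) ** matrix_inv D"
proof (rule matrix_inv_eq_right_inverse)
  let ?Q = "matrix_inv D + mat (1 / c)"
  have Q: "invertible ?Q"
    using posdef_invertible[OF posdef_add_mat[OF posdef_matrix_inv[OF D]]] c by simp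
  have iD: "invertible D" using posdef_invertible[OF D] .
  have factor: "mat 1 + (1 / c) *\<^sub>R D = D ** ?Q"
    unfolding matrix_eq
    by (simp add: matrix_vector_mult_add_rdistrib mat_mult_vector scaleR_matrix_vector_assoc
        matrix_vector_right_distrib matrix_vector_mult_scaleR
        flip: matrix_vector_mul_assoc add: matrix_inv_cancel[OF iD])
  show "(mat 1 + (1 / c) *\<^sub>R D) ** (matrix_inv ?Q ** matrix_inv D) = mat 1"
    unfolding factor by (metis matrix_inv_inverse iD Q matrix_mul_assoc matrix_mul_rid)
qed

lemma posdef_rank_one_update_le:
  assumes P: "posdef P"
  shows "(matrix_inv (P + outer x) *v (P *v a)) \<bullet> (P *v a) \<le> a \<bullet> (P *v a)"
proof -
  define g where "g = matrix_inv (P + outer x) *v (P *v a)"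
  have "(P + outer x) *v g = P *v a"
    unfolding g_def using matrix_inv_cancel(1)[OF posdef_invertible[OF posdef_add_outer[OF P]]] .
  then have Pa: "P *v a = P *v g + (x \<bullet> g) *\<^sub>R x"
    by (simp add: matrix_vector_mult_add_rdistrib outer_mult_vector)
  have "0 \<le> (a - g) \<bullet> (P *v (a - g))" using posdef_nonneg[OF P] .
  also have "\<dots> = a \<bullet> (P *v a) - g \<bullet> (P *v a) - (x \<bullet> g)\<^sup>2"
    unfolding posdef_quadratic_form_diff[OF P] posdef_symmetric[OF P, of a g] Pa
    by (simp add: inner_add_right inner_add_left power2_eq_square inner_commute)
  finally show ?thesis using zero_le_power2[of "x \<bullet> g"] unfolding g_def by linarith
qed

lemma rank_one_update_on_mistake:
  fixes P :: "real^'n::finite^'n" and x a v :: "real^'n" and y :: real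
  assumes P: "posdef P" and y: "y * y = 1"
  defines "K \<equiv> matrix_inv (P + outer x)" and "e \<equiv> P *v a + y *\<^sub>R x"
  assumes wrong_sign: "y * (x \<bullet> (K *v (P *v a))) \<le> 0"
  shows "(v - K *v e) \<bullet> ((P + outer x) *v (v - K *v e)) - x \<bullet> (K *v x)
         \<le> (v - a) \<bullet> (P *v (v - a)) + (v \<bullet> x)\<^sup>2 - 2 * y * (v \<bullet> x)"
proof -
  have Px: "posdef (P + outer x)" using posdef_add_outer[OF P] .
  have K: "posdef K" unfolding K_def using posdef_matrix_inv[OF Px] .
  have Ke: "(P + outer x) *v (K *v e) = e"
    unfolding K_def using matrix_inv_cancel(1)[OF posdef_invertible[OF Px]] .
  have "(v - K *v e) \<bullet> ((P + outer x) *v (v - K *v e)) = v \<bullet> ((P + outer x) *v v) - 2 * (v \<bullet> e) + (K *v e) \<bullet> e"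
    using posdef_quadratic_form_diff[OF Px, of v "K *v e"] by (simp add: Ke inner_commute)
  moreover have "v \<bullet> ((P + outer x) *v v) = v \<bullet> (P *v v) + (v \<bullet> x)\<^sup>2"
    by (simp add: quadratic_form_add_outer inner_commute)
  moreover have "v \<bullet> e = v \<bullet> (P *v a) + y * (v \<bullet> x)"
    by (simp add: e_def inner_add_right)
  moreover have "(K *v e) \<bullet> e = (K *v (P *v a)) \<bullet> (P *v a) + 2 * y * (x \<bullet> (K *v (P *v a))) + x \<bullet> (K *v x)"
    using posdef_symmetric[OF K, of x "P *v a"] y
    by (simp add: e_def matrix_vector_right_distrib matrix_vector_mult_scaleR inner_add_left
        inner_add_right inner_commute algebra_simps)
  moreover have "(K *v (P *v a)) \<bullet> (P *v a) \<le> a \<bullet> (P *v a)"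
    unfolding K_def using posdef_rank_one_update_le[OF P] .
  ultimately show ?thesis
    using wrong_sign posdef_quadratic_form_diff[OF P, of v a] by linarith
qed

lemma le_sqrt_mult_if_quadratic_bound:
  fixes Q R S :: real
  assumes quadratic: "\<And>\<alpha>. 2 * \<alpha> * S \<le> \<alpha>\<^sup>2 * Q + R" and "0 \<le> Q" "0 \<le> R"
  shows "S \<le> sqrt (Q * R)"
proof (cases "S \<le> 0")
  case True
  then show ?thesis using \<open>0 \<le> Q\<close> \<open>0 \<le> R\<close> by (meson order_trans real_sqrt_ge_zero zero_le_mult_iff)
next
  case False
  show ?thesis
  proof (cases "Q = 0")
    case True
    have "2 * ((R + 1) / (2 * S)) * S \<le> R" using quadratic[of "(R + 1) / (2 * S)"] True by simp
    then show ?thesis using False by simp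
  next
    case False
    then have "0 < Q" using \<open>0 \<le> Q\<close> by simp
    have "2 * (S / Q) * S \<le> (S / Q)\<^sup>2 * Q + R" using quadratic .
    then have "S\<^sup>2 \<le> Q * R" using \<open>0 < Q\<close> by (simp add: field_simps power2_eq_square)
    then show ?thesis by (meson real_le_rsqrt)
  qed
qed

lemma mult_nonpos_if_sgn_ne:
  fixes p y :: real
  assumes "sgn p \<noteq> y" and "y = 1 \<or> y = -1"
  shows "y * p \<le> 0"
  using assms by (auto simp: sgn_if mult_le_0_iff split: if_splits)

lemma sorted_list_of_set_insert_greatest:
  assumes "finite M" "\<forall>t\<in>M. t < n"
  shows "sorted_list_of_set (insert n M) = sorted_list_of_set M @ [n]"
proof -
  have "sorted_wrt (<) (sorted_list_of_set M @ [n]) \<and> set (sorted_list_of_set M @ [n]) = insert n M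
        \<and> length (sorted_list_of_set M @ [n]) = card (insert n M)"
    using assms by (auto simp: sorted_wrt_append strict_sorted_list_of_set)
  then show ?thesis
    using sorted_list_of_set_unique[of "insert n M" "sorted_list_of_set M @ [n]"] assms(1) by simp
qed

lemma sum_nth_append_singleton:
  "(\<Sum>k=1..Suc (length L). f k ((L @ [n]) ! (k - 1)))
     = (\<Sum>k=1..length L. f k (L ! (k - 1))) + f (Suc (length L)) n"
proof -
  have "(\<Sum>k=1..length L. f k ((L @ [n]) ! (k - 1))) = (\<Sum>k=1..length L. f k (L ! (k - 1)))"
    by (rule sum.cong) (auto simp: nth_append)
  then show ?thesis by (simp add: sum.cl_ivl_Suc)
qed

lemma sum_sorted_list_of_set_nth:
  fixes g :: "'a::linorder \<Rightarrow> 'b::comm_monoid_add"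
  assumes "finite M"
  shows "(\<Sum>t\<in>M. g t) = (\<Sum>k=1..card M. g (sorted_list_of_set M ! (k - 1)))"
proof -
  let ?L = "sorted_list_of_set M"
  have "(\<Sum>t\<in>M. g t) = sum_list (map g ?L)"
    using sum_list_distinct_conv_sum_set[of ?L g] assms by simp
  also have "\<dots> = (\<Sum>i<card M. g (?L ! i))"
    by (simp add: sum_list_sum_nth atLeast0LessThan)
  also have "\<dots> = (\<Sum>k=1..card M. g (?L ! (k - 1)))"
    by (simp add: sum.atLeast1_atMost_eq)
  finally show ?thesis .
qed

lemma lasec_state_Suc:
  "lasec_state b c x y (Suc t) =
    (if lasec_mistake b c x y (Suc t)
     then (lasec_S c (fst (lasec_state b c x y t)) (x (Suc t)),
           matrix_inv (mat 1 + (1 / c) *\<^sub>R fst (lasec_state b c x y t)) *v snd (lasec_state b c x y t)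
             + y (Suc t) *\<^sub>R x (Suc t))
     else lasec_state b c x y t)"
  by (simp add: lasec_mistake_def split: prod.split)

lemma lasec_mistakes_Suc:
  "lasec_mistakes b c x y (Suc T) =
    (if lasec_mistake b c x y (Suc T) then insert (Suc T) (lasec_mistakes b c x y T)
     else lasec_mistakes b c x y T)"
  unfolding lasec_mistakes_def by (auto simp: le_Suc_eq)

lemma lasec_mistakes_subset: "lasec_mistakes b c x y T \<subseteq> {1..T}"
  unfolding lasec_mistakes_def by auto

lemma lasec_state_posdef:
  assumes "0 < b" "b < c"
  shows "posdef (fst (lasec_state b c x y t))"
proof (induction t)
  case 0
  have "0 < b * c / (c - b)" using assms by simp
  then show ?case by (simp add: lasec_D0_def posdef_mat)
next
  case (Suc t)
  have "0 < 1 / c" using assms by simp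
  then show ?case using Suc unfolding lasec_state_Suc
    by (simp add: lasec_S_def posdef_add_outer posdef_matrix_inv posdef_add_mat)
qed

definition lasec_potential :: "'n::finite mat \<times> 'n vec \<Rightarrow> 'n vec \<Rightarrow> real" where
  "lasec_potential s w = (w - matrix_inv (fst s) *v snd s) \<bullet> (fst s *v (w - matrix_inv (fst s) *v snd s))"

definition lasec_confidence :: "real \<Rightarrow> real \<Rightarrow> (nat \<Rightarrow> 'd::finite vec) \<Rightarrow> (nat \<Rightarrow> real) \<Rightarrow> nat \<Rightarrow> real" where
  "lasec_confidence b c x y t = x t \<bullet> (matrix_inv (fst (lasec_state b c x y t)) *v x t)"

lemma lasec_potential_nonneg:
  assumes "0 < b" "b < c"
  shows "0 \<le> lasec_potential (lasec_state b c x y t) w"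
  unfolding lasec_potential_def using posdef_nonneg[OF lasec_state_posdef[OF assms]] .

lemma lasec_confidence_nonneg:
  assumes "0 < b" "b < c"
  shows "0 \<le> lasec_confidence b c x y t"
  unfolding lasec_confidence_def
  using posdef_nonneg[OF posdef_matrix_inv[OF lasec_state_posdef[OF assms]]] .

lemma lasec_potential_mistake_step:
  assumes b: "0 < b" "b < c" and mistake: "lasec_mistake b c x y (Suc t)"
    and y: "y (Suc t) = 1 \<or> y (Suc t) = -1"
  shows "lasec_potential (lasec_state b c x y (Suc t)) v - lasec_confidence b c x y (Suc t)
     \<le> lasec_potential (lasec_state b c x y t) w + c * (norm (v - w))\<^sup>2 + (v \<bullet> x (Suc t))\<^sup>2
        - 2 * y (Suc t) * (v \<bullet> x (Suc t))"
proof -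
  obtain D e where st: "lasec_state b c x y t = (D, e)" by (cases "lasec_state b c x y t")
  define P where "P = matrix_inv (matrix_inv D + mat (1 / c))"
  define a where "a = matrix_inv D *v e"
  have c: "0 < c" using b by simp
  have D: "posdef D" using lasec_state_posdef[OF b, of x y t] st by simp
  have P: "posdef P" unfolding P_def using posdef_matrix_inv[OF posdef_add_mat[OF posdef_matrix_inv[OF D]]] c by simp
  have shrink: "matrix_inv (mat 1 + (1 / c) *\<^sub>R D) *v e = P *v a"
    unfolding P_def a_def matrix_inv_id_plus_scaled[OF D c] by (simp add: matrix_vector_mul_assoc)
  have "sgn (x (Suc t) \<bullet> (matrix_inv (P + outer (x (Suc t))) *v (P *v a))) \<noteq> y (Suc t)"
    using mistake shrink st unfolding lasec_mistake_def lasec_p_def lasec_S_def P_def by simp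
  then have wrong_sign: "y (Suc t) * (x (Suc t) \<bullet> (matrix_inv (P + outer (x (Suc t))) *v (P *v a))) \<le> 0"
    using mult_nonpos_if_sgn_ne y by blast
  have "y (Suc t) * y (Suc t) = 1" using y by auto
  note update = rank_one_update_on_mistake[OF P this wrong_sign, of v]
  have "lasec_state b c x y (Suc t) = (P + outer (x (Suc t)), P *v a + y (Suc t) *\<^sub>R x (Suc t))"
    using mistake unfolding lasec_state_Suc st by (simp add: shrink lasec_S_def P_def)
  then have "lasec_potential (lasec_state b c x y (Suc t)) v - lasec_confidence b c x y (Suc t)
     \<le> (v - a) \<bullet> (P *v (v - a)) + (v \<bullet> x (Suc t))\<^sup>2 - 2 * y (Suc t) * (v \<bullet> x (Suc t))"
    using update by (simp add: lasec_potential_def lasec_confidence_def)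
  moreover have "(v - a) \<bullet> (P *v (v - a)) \<le> lasec_potential (lasec_state b c x y t) w + c * (norm (v - w))\<^sup>2"
    using quadratic_form_smoothed_le[OF D c, of "v - a" "w - a"]
    by (simp add: st lasec_potential_def P_def a_def)
  ultimately show ?thesis by linarith
qed

definition lasec_mistake_list :: "real \<Rightarrow> real \<Rightarrow> (nat \<Rightarrow> 'd::finite vec) \<Rightarrow> (nat \<Rightarrow> real) \<Rightarrow> nat \<Rightarrow> nat list" where
  "lasec_mistake_list b c x y T = sorted_list_of_set (lasec_mistakes b c x y T)"

lemma lasec_mistake_list_Suc:
  "lasec_mistake_list b c x y (Suc T) =
     (if lasec_mistake b c x y (Suc T) then lasec_mistake_list b c x y T @ [Suc T]
      else lasec_mistake_list b c x y T)"
proof (cases "lasec_mistake b c x y (Suc T)")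
  case True
  have "finite (lasec_mistakes b c x y T)"
    using finite_subset[OF lasec_mistakes_subset finite_atLeastAtMost] .
  moreover have "\<forall>t\<in>lasec_mistakes b c x y T. t < Suc T" using lasec_mistakes_subset by fastforce
  ultimately show ?thesis
    unfolding lasec_mistake_list_def lasec_mistakes_Suc if_P[OF True]
    by (rule sorted_list_of_set_insert_greatest)
next
  case False
  show ?thesis unfolding lasec_mistake_list_def lasec_mistakes_Suc if_not_P[OF False] ..
qed

definition comparator_cost :: "real \<Rightarrow> (nat \<Rightarrow> 'd::finite vec) \<Rightarrow> (nat \<Rightarrow> real) \<Rightarrow> (nat \<Rightarrow> 'd vec) \<Rightarrow> nat \<Rightarrow> nat \<Rightarrow> real" where
  "comparator_cost c x y v k t = c * (norm (v k - v (k - 1)))\<^sup>2 + (v k \<bullet> x t)\<^sup>2 - 2 * y t * (v k \<bullet> x t)"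

lemma lasec_potential_telescope:
  assumes b: "0 < b" "b < c" and y: "\<forall>t\<in>{1..T}. y t = 1 \<or> y t = -1"
  shows "lasec_potential (lasec_state b c x y T) (v (length (lasec_mistake_list b c x y T)))
     - (\<Sum>k=1..length (lasec_mistake_list b c x y T).
          lasec_confidence b c x y (lasec_mistake_list b c x y T ! (k - 1)))
     \<le> v 0 \<bullet> (lasec_D0 b c *v v 0)
       + (\<Sum>k=1..length (lasec_mistake_list b c x y T).
            comparator_cost c x y v k (lasec_mistake_list b c x y T ! (k - 1)))"
  using y
proof (induction T)
  case 0
  have "lasec_mistakes b c x y 0 = {}" using lasec_mistakes_subset by fastforce
  then show ?case by (simp add: lasec_mistake_list_def lasec_potential_def)
next
  case (Suc T)
  have "\<forall>t\<in>{1..T}. y t = 1 \<or> y t = -1" using Suc.prems by auto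
  note IH = Suc.IH[OF this]
  show ?case
  proof (cases "lasec_mistake b c x y (Suc T)")
    case False
    then show ?thesis using IH unfolding lasec_mistake_list_Suc lasec_state_Suc by simp
  next
    case True
    define L where "L = lasec_mistake_list b c x y T"
    have L: "lasec_mistake_list b c x y (Suc T) = L @ [Suc T]"
      using True by (simp add: L_def lasec_mistake_list_Suc)
    have "y (Suc T) = 1 \<or> y (Suc T) = -1" using Suc.prems by auto
    note step = lasec_potential_mistake_step[OF b True this, of "v (Suc (length L))" "v (length L)"]
    have "comparator_cost c x y v (Suc (length L)) (Suc T)
        = c * (norm (v (Suc (length L)) - v (length L)))\<^sup>2 + (v (Suc (length L)) \<bullet> x (Suc T))\<^sup>2
          - 2 * y (Suc T) * (v (Suc (length L)) \<bullet> x (Suc T))"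
      by (simp add: comparator_cost_def)
    moreover have "(\<Sum>k=1..Suc (length L). lasec_confidence b c x y ((L @ [Suc T]) ! (k - 1)))
        = (\<Sum>k=1..length L. lasec_confidence b c x y (L ! (k - 1))) + lasec_confidence b c x y (Suc T)"
      by (rule sum_nth_append_singleton)
    moreover have "(\<Sum>k=1..Suc (length L). comparator_cost c x y v k ((L @ [Suc T]) ! (k - 1)))
        = (\<Sum>k=1..length L. comparator_cost c x y v k (L ! (k - 1)))
          + comparator_cost c x y v (Suc (length L)) (Suc T)"
      by (rule sum_nth_append_singleton)
    ultimately show ?thesis
      using IH step unfolding L length_append_singleton L_def[symmetric] by linarith
  qed
qed

text \<open>
  \<open>v\<^sub>0 = \<alpha>(c - b)/c \<cdot> u\<close> minimises the initial cost against \<open>v\<^sub>1 = \<alpha> u\<close>; the result involves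
  \<open>b\<close> because \<open>1/(bc/(c - b)) + 1/c = 1/b\<close>.
\<close>

lemma lasec_initial_cost:
  fixes u :: "real^'n::finite"
  assumes "0 < b" "b < c"
  shows "((\<alpha> * (c - b) / c) *\<^sub>R u) \<bullet> (lasec_D0 b c *v ((\<alpha> * (c - b) / c) *\<^sub>R u))
     + c * (norm (\<alpha> *\<^sub>R u - (\<alpha> * (c - b) / c) *\<^sub>R u))\<^sup>2 = \<alpha>\<^sup>2 * (b * (norm u)\<^sup>2)"
proof -
  define s where "s = \<alpha> * (c - b) / c"
  define r where "r = \<alpha> * b / c"
  have "\<alpha> *\<^sub>R u - s *\<^sub>R u = r *\<^sub>R u"
    using assms by (simp add: s_def r_def algebra_simps diff_divide_distrib flip: scaleR_diff_left)
  then have "(s *\<^sub>R u) \<bullet> (lasec_D0 b c *v (s *\<^sub>R u)) + c * (norm (\<alpha> *\<^sub>R u - s *\<^sub>R u))\<^sup>2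
      = ((b * c / (c - b)) * s\<^sup>2 + c * r\<^sup>2) * (norm u)\<^sup>2"
    by (simp add: lasec_D0_def quadratic_form_mat power_mult_distrib power2_eq_square algebra_simps)
  also have "(b * c / (c - b)) * s\<^sup>2 + c * r\<^sup>2 = \<alpha>\<^sup>2 * b"
    using assms by (simp add: s_def r_def field_simps power2_eq_square)
  finally show ?thesis unfolding s_def by simp
qed

lemma lasec_quadratic_in_scale:
  fixes b c \<alpha> :: real and T :: nat and y :: "nat \<Rightarrow> real" and x u :: "nat \<Rightarrow> real^'d::finite"
  assumes b: "0 < b" "b < c" and y: "\<forall>t\<in>{1..T}. y t = 1 \<or> y t = -1"
  defines "L \<equiv> lasec_mistake_list b c x y T"
  defines "t \<equiv> \<lambda>k. L ! (k - 1)" and "m \<equiv> length L"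
  shows "2 * \<alpha> * (\<Sum>k=1..m. y (t k) * (u (t k) \<bullet> x (t k)))
     \<le> \<alpha>\<^sup>2 * (b * (norm (u (t 1)))\<^sup>2 + c * (\<Sum>k=2..m. (norm (u (t k) - u (t (k - 1))))\<^sup>2)
                + (\<Sum>k=1..m. (u (t k) \<bullet> x (t k))\<^sup>2))
       + (\<Sum>k=1..m. lasec_confidence b c x y (t k))"
proof (cases "m = 0")
  case True
  then show ?thesis using b by simp
next
  case False
  define v where "v k = (if k = 0 then (\<alpha> * (c - b) / c) *\<^sub>R u (t 1) else \<alpha> *\<^sub>R u (t k))" for k
  have "L ! (k - 1) = t k" for k by (simp add: t_def)
  then have "- (\<Sum>k=1..m. lasec_confidence b c x y (t k))
     \<le> v 0 \<bullet> (lasec_D0 b c *v v 0)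
       + (\<Sum>k=1..m. c * (norm (v k - v (k - 1)))\<^sup>2 + (v k \<bullet> x (t k))\<^sup>2 - 2 * y (t k) * (v k \<bullet> x (t k)))"
    using lasec_potential_telescope[OF b y, where v = v and x = x] lasec_potential_nonneg[OF b, of x y T "v m"]
    unfolding L_def[symmetric] m_def[symmetric] comparator_cost_def by simp
  also have "\<dots> = v 0 \<bullet> (lasec_D0 b c *v v 0) + c * (norm (v 1 - v 0))\<^sup>2
       + (\<Sum>k=2..m. c * (norm (v k - v (k - 1)))\<^sup>2)
       + (\<Sum>k=1..m. (v k \<bullet> x (t k))\<^sup>2) - (\<Sum>k=1..m. 2 * y (t k) * (v k \<bullet> x (t k)))"
    using sum.atLeast_Suc_atMost[of 1 m "\<lambda>k. c * (norm (v k - v (k - 1)))\<^sup>2"] False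
    by (simp add: sum.distrib sum_subtractf numeral_2_eq_2)
  also have "v 0 \<bullet> (lasec_D0 b c *v v 0) + c * (norm (v 1 - v 0))\<^sup>2 = \<alpha>\<^sup>2 * (b * (norm (u (t 1)))\<^sup>2)"
    unfolding v_def using lasec_initial_cost[OF b, of \<alpha> "u (t 1)"] by simp
  also have "(\<Sum>k=2..m. c * (norm (v k - v (k - 1)))\<^sup>2)
      = \<alpha>\<^sup>2 * (c * (\<Sum>k=2..m. (norm (u (t k) - u (t (k - 1))))\<^sup>2))"
    unfolding sum_distrib_left
    by (rule sum.cong) (auto simp: v_def power_mult_distrib power2_abs
        simp flip: scaleR_diff_right)
  also have "(\<Sum>k=1..m. (v k \<bullet> x (t k))\<^sup>2) = \<alpha>\<^sup>2 * (\<Sum>k=1..m. (u (t k) \<bullet> x (t k))\<^sup>2)"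
    unfolding sum_distrib_left by (rule sum.cong) (auto simp: v_def power_mult_distrib)
  also have "(\<Sum>k=1..m. 2 * y (t k) * (v k \<bullet> x (t k))) = 2 * \<alpha> * (\<Sum>k=1..m. y (t k) * (u (t k) \<bullet> x (t k)))"
    unfolding sum_distrib_left by (rule sum.cong) (auto simp: v_def)
  finally show ?thesis by (simp add: algebra_simps)
qed

lemma sum_margin_le_hinge_total:
  assumes "M \<subseteq> {1..T}"
  shows "(\<Sum>t\<in>M. \<gamma> - y t * (u t \<bullet> x t)) \<le> hinge_total \<gamma> x y u T"
proof -
  have "(\<Sum>t\<in>M. \<gamma> - y t * (u t \<bullet> x t)) \<le> (\<Sum>t\<in>M. max 0 (\<gamma> - y t * (u t \<bullet> x t)))"
    by (rule sum_mono) simp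
  also have "\<dots> \<le> hinge_total \<gamma> x y u T"
    unfolding hinge_total_def by (rule sum_mono2[OF _ assms]) auto
  finally show ?thesis .
qed

theorem theorem2:
  fixes b c \<gamma> :: real and T :: nat
    and x :: "nat \<Rightarrow> real ^ 'd::finite" and y :: "nat \<Rightarrow> real"
    and u :: "nat \<Rightarrow> real ^ 'd"
  assumes "0 < b" and "b < c"
    and "\<forall>t \<in> {1..T}. y t = 1 \<or> y t = -1"
    and "0 < \<gamma>"
  shows
    "let M = lasec_mistakes b c x y T;
         m = card M;
         tk = (\<lambda>k. sorted_list_of_set M ! (k - 1));
         Dk = (\<lambda>k. fst (lasec_state b c x y (tk k)));
         V = (\<Sum>k = 2..m. (norm (u (tk k) - u (tk (k - 1))))\<^sup>2)
     in real m \<le> hinge_total \<gamma> x y u T / \<gamma>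
          + (1 / \<gamma>) * sqrt ((b * (norm (u (tk 1)))\<^sup>2 + c * V
                 + (\<Sum>k = 1..m. (u (tk k) \<bullet> x (tk k))\<^sup>2))
               * (\<Sum>k = 1..m. x (tk k) \<bullet> (matrix_inv (Dk k) *v x (tk k))))"
proof -
  define M where "M = lasec_mistakes b c x y T"
  define t where "t = (\<lambda>k. sorted_list_of_set M ! (k - 1))"
  define m where "m = card M"
  define Q where "Q = b * (norm (u (t 1)))\<^sup>2 + c * (\<Sum>k = 2..m. (norm (u (t k) - u (t (k - 1))))\<^sup>2)
                     + (\<Sum>k = 1..m. (u (t k) \<bullet> x (t k))\<^sup>2)"
  define R where "R = (\<Sum>k = 1..m. lasec_confidence b c x y (t k))"
  define S where "S = (\<Sum>k = 1..m. y (t k) * (u (t k) \<bullet> x (t k)))"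
  have M: "M \<subseteq> {1..T}" unfolding M_def by (rule lasec_mistakes_subset)
  have "finite M" using finite_subset[OF M finite_atLeastAtMost] .
  have "real m * \<gamma> - S \<le> hinge_total \<gamma> x y u T"
    using sum_margin_le_hinge_total[OF M, of \<gamma> y u x]
    unfolding sum_sorted_list_of_set_nth[OF \<open>finite M\<close>] by (simp add: sum_subtractf S_def t_def m_def)
  moreover have "S \<le> sqrt (Q * R)"
  proof (rule le_sqrt_mult_if_quadratic_bound)
    show "2 * \<alpha> * S \<le> \<alpha>\<^sup>2 * Q + R" for \<alpha>
      using lasec_quadratic_in_scale[OF assms(1-3), where \<alpha> = \<alpha> and u = u]
      unfolding Q_def R_def S_def t_def m_def M_def lasec_mistake_list_def by simp
    show "0 \<le> Q" unfolding Q_def using assms(1,2) by (simp add: sum_nonneg)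
    show "0 \<le> R" unfolding R_def by (intro sum_nonneg lasec_confidence_nonneg[OF assms(1,2)])
  qed
  ultimately have "real m \<le> hinge_total \<gamma> x y u T / \<gamma> + (1 / \<gamma>) * sqrt (Q * R)"
    using assms(4) by (simp add: field_simps)
  then show ?thesis unfolding Let_def Q_def R_def t_def m_def M_def lasec_confidence_def by simp
qed

end
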